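(* Let $r\geq 1$ be an integer. Then $$ \zeta_r(0)=\frac{(-1)^r}{4^r}\binom{2r}{r} \quad\text{and}\quad \zeta^{\star}_r(0)=-\frac{1}{r\,2^{2r-1}}\binom{2r-2}{r-1}. $$
   Context: For an integer $r\geq 1$ and real $s>1$, let $\zeta_r(s):=\sum_{n_1>\cdots>n_r>0}\prod_{i=1}^r n_i^{-s}$ and $\zeta^{\star}_r(s):=\sum_{n_1\geq\cdots\geq n_r\geq 1}\prod_{i=1}^r n_i^{-s}$ (integer summation indices), i.e. the multiple zeta and multiple zeta-star functions at identical arguments $(s,\ldots,s)$. These one-variable functions extend meromorphically to $s\in\mathbb{C}$ (for instance because each equals a polynomial with rational coefficients in $\zeta(s),\zeta(2s),\ldots,\zeta(rs)$, where $\zeta$ is the Riemann zeta function), and $\zeta_r(0)$, $\zeta^{\star}_r(0)$ denote the values of these meromorphic continuations at $s=0$. *)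

theory Defs
  imports "HOL-Complex_Analysis.Complex_Analysis"
begin

definition mzv_idx :: "nat \<Rightarrow> nat list set" where
  "mzv_idx r = {ns. length ns = r \<and> sorted_wrt (>) ns \<and> (\<forall>n\<in>set ns. n > 0)}"

definition mzsv_idx :: "nat \<Rightarrow> nat list set" where
  "mzsv_idx r = {ns. length ns = r \<and> sorted_wrt (\<ge>) ns \<and> (\<forall>n\<in>set ns. n \<ge> 1)}"

text \<open>zeta_r(s) and zeta*_r(s) at identical arguments (s,...,s), as series
  (meaningful for Re s > 1).\<close>
definition mzeta :: "nat \<Rightarrow> complex \<Rightarrow> complex" where
  "mzeta r s = (\<Sum>\<^sub>\<infinity>ns\<in>mzv_idx r. \<Prod>n\<leftarrow>ns. of_nat n powr (-s))"

definition mzeta_star :: "nat \<Rightarrow> complex \<Rightarrow> complex" where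
  "mzeta_star r s = (\<Sum>\<^sub>\<infinity>ns\<in>mzsv_idx r. \<Prod>n\<leftarrow>ns. of_nat n powr (-s))"

text \<open>"The meromorphic continuation of f (given on Re s > 1) takes the value v at 0":
  there is a function holomorphic on a connected open set containing 0 and the
  half-plane Re s > 1, agreeing with f there, with value v at 0. By the identity
  theorem, v is then uniquely determined.\<close>
definition cont_value_at_0 :: "(complex \<Rightarrow> complex) \<Rightarrow> complex \<Rightarrow> bool" where
  "cont_value_at_0 f v \<longleftrightarrow>
     (\<exists>U F. open U \<and> connected U \<and> 0 \<in> U \<and> {s. Re s > 1} \<subseteq> U \<and>
        F holomorphic_on U \<and> (\<forall>s. Re s > 1 \<longrightarrow> F s = f s) \<and> F 0 = v)"

end

theory Submission
  imports Defs
begin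

text \<open>
  \<open>\<zeta>\<^sub>r(s)\<close> and \<open>\<zeta>\<^sup>\<star>\<^sub>r(s)\<close> are the elementary and the complete homogeneous symmetric
  functions \<open>e\<^sub>r\<close>, \<open>h\<^sub>r\<close> of the variables \<open>n powr -s\<close>, \<open>n \<ge> 1\<close>. Newton's identities express them
  as universal polynomials in the power sums \<open>p\<^sub>k = \<zeta>(k s)\<close>, \<open>k \<le> r\<close>: exactly for the truncations
  to \<open>n \<le> N\<close>, hence for \<open>Re s > 1\<close> in the limit \<open>N \<rightarrow> \<infinity>\<close>. Continuing \<open>\<zeta>\<close> to \<open>Re s > -1/2\<close>
  (by summing the errors of the trapezoidal rule for \<open>\<integral> t powr -s dt\<close>), the same polynomials in
  the \<open>\<zeta>(k s)\<close> continue \<open>\<zeta>\<^sub>r\<close> and \<open>\<zeta>\<^sup>\<star>\<^sub>r\<close>, and at \<open>s = 0\<close> every power sum equals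
  \<open>\<zeta>(0) = -1/2\<close>. For constant power sums \<open>c\<close> the generating series of \<open>e\<close> is \<open>(1 + t) powr c\<close>,
  so \<open>\<zeta>\<^sub>r(0) = (-1/2 gchoose r)\<close> and \<open>\<zeta>\<^sup>\<star>\<^sub>r(0) = (-1)^r * (1/2 gchoose r)\<close>, which are the
  central binomial expressions of the theorem.
\<close>

section \<open>Symmetric functions from power sums\<close>

text \<open>Newton's identities \<open>r * e r = (\<Sum>k<r. (-1)^k * p (k + 1) * e (r - 1 - k))\<close> and
  \<open>r * h r = (\<Sum>k<r. p (k + 1) * h (r - 1 - k))\<close>, taken as definitions of \<open>e\<close> and \<open>h\<close> in terms
  of the power sums \<open>p\<close>.\<close>
fun newton_e :: "(nat \<Rightarrow> 'a::field_char_0) \<Rightarrow> nat \<Rightarrow> 'a" where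
  "newton_e p 0 = 1"
| "newton_e p (Suc r) = (\<Sum>k\<le>r. (-1)^k * p (Suc k) * newton_e p (r - k)) / of_nat (Suc r)"

fun newton_h :: "(nat \<Rightarrow> 'a::field_char_0) \<Rightarrow> nat \<Rightarrow> 'a" where
  "newton_h p 0 = 1"
| "newton_h p (Suc r) = (\<Sum>k\<le>r. p (Suc k) * newton_h p (r - k)) / of_nat (Suc r)"

lemma newton_h_eq_newton_e: "newton_h p r = (-1)^r * newton_e (\<lambda>k. - p k) r"
proof (induction r rule: less_induct)
  case (less r)
  show ?case
  proof (cases r)
    case (Suc m)
    have "(\<Sum>k\<le>m. p (Suc k) * newton_h p (m - k))
        = (-1)^Suc m * (\<Sum>k\<le>m. (-1)^k * - p (Suc k) * newton_e (\<lambda>k. - p k) (m - k))"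
      unfolding sum_distrib_left
    proof (intro sum.cong refl)
      fix k assume "k \<in> {..m}"
      then have "(-1::'a)^(m - k) = (-1)^Suc m * (-1)^k * -1"
        by (simp add: power_add [symmetric] minus_one_power_iff)
      then show "p (Suc k) * newton_h p (m - k)
          = (-1)^Suc m * ((-1)^k * - p (Suc k) * newton_e (\<lambda>k. - p k) (m - k))"
        using less.IH[of "m - k"] Suc by simp
    qed
    then show ?thesis using Suc by simp
  qed simp
qed

lemma fps_deriv_newton_e:
  "fps_deriv (Abs_fps (newton_e p)) = Abs_fps (\<lambda>k. (-1)^k * p (Suc k)) * Abs_fps (newton_e p)"
  by (rule fps_ext) (simp add: fps_mult_nth atLeast0AtMost del: of_nat_Suc)

text \<open>For the generating series \<open>E\<close> of \<open>e\<close>, Newton's identity is the linear ODE \<open>E' = P E\<close>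
  with \<open>E(0) = 1\<close>, which determines \<open>E\<close>. Adding a variable \<open>x\<close> adds \<open>x / (1 + x t)\<close> to \<open>P\<close>,
  and \<open>(1 + x t) E\<close> solves the new ODE.\<close>
lemma newton_e_fps_unique:
  fixes F :: "'a::field_char_0 fps"
  assumes "fps_nth F 0 = 1" and "fps_deriv F = Abs_fps (\<lambda>k. (-1)^k * p (Suc k)) * F"
  shows "F = Abs_fps (newton_e p)"
proof -
  have "fps_nth F n = newton_e p n" for n
  proof (induction n rule: less_induct)
    case (less n)
    show ?case
    proof (cases n)
      case (Suc m)
      have "of_nat (Suc m) * fps_nth F (Suc m) = fps_nth (fps_deriv F) m" by simp
      also have "\<dots> = (\<Sum>k\<le>m. (-1)^k * p (Suc k) * newton_e p (m - k))"
        using less Suc by (simp add: assms(2) fps_mult_nth atLeast0AtMost)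
      finally show ?thesis using Suc by (simp add: field_simps del: of_nat_Suc)
    qed (simp add: assms(1))
  qed
  then show ?thesis by (simp add: fps_eq_iff)
qed

lemma newton_e_add_var:
  "newton_e (\<lambda>k. p k + x^k) (Suc r) = newton_e p (Suc r) + x * newton_e p r"
proof -
  define E where "E = Abs_fps (newton_e p)"
  define P where "P = Abs_fps (\<lambda>k. (-1)^k * p (Suc k))"
  define Q where "Q = Abs_fps (\<lambda>k. (-1)^k * x^Suc k)"
  define L where "L = 1 + fps_const x * fps_X"
  have LQ: "L * Q = fps_const x"
  proof (rule fps_ext)
    fix n show "fps_nth (L * Q) n = fps_nth (fps_const x) n"
      by (cases n) (simp_all add: L_def Q_def algebra_simps)
  qed
  have "fps_deriv (L * E) = Abs_fps (\<lambda>k. (-1)^k * (p (Suc k) + x^Suc k)) * (L * E)"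
  proof -
    have "Abs_fps (\<lambda>k. (-1)^k * (p (Suc k) + x^Suc k)) = P + Q"
      by (simp add: P_def Q_def fps_eq_iff algebra_simps)
    moreover have "fps_deriv E = P * E" unfolding E_def P_def by (rule fps_deriv_newton_e)
    moreover have "fps_deriv L = fps_const x" by (simp add: L_def)
    ultimately show ?thesis by (simp add: algebra_simps flip: LQ)
  qed
  then have "L * E = Abs_fps (newton_e (\<lambda>k. p k + x^k))"
    by (intro newton_e_fps_unique) (simp add: L_def E_def)
  moreover have "fps_nth (L * E) (Suc r) = newton_e p (Suc r) + x * newton_e p r"
    by (simp add: L_def E_def algebra_simps del: newton_e.simps)
  ultimately show ?thesis by simp
qed

lemma newton_e_const: "newton_e (\<lambda>_. c) r = c gchoose r"
proof (induction r rule: less_induct)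
  case (less r)
  show ?case
  proof (cases r)
    case (Suc m)
    have "(\<Sum>k\<le>m. (-1)^k * c * newton_e (\<lambda>_. c) (m - k)) = c * (\<Sum>k\<le>m. (-1)^(m - k) * (c gchoose k))"
      unfolding sum_distrib_left
      by (rule sum.reindex_bij_witness[where i="\<lambda>k. m - k" and j="\<lambda>k. m - k"]) (use less Suc in auto)
    also have "(\<Sum>k\<le>m. (-1)^(m - k) * (c gchoose k)) = (-1)^m * (\<Sum>k\<le>m. (c gchoose k) * (-1)^k)"
      unfolding sum_distrib_left by (intro sum.cong refl) (auto simp: minus_one_power_iff)
    also have "\<dots> = (c - 1) gchoose m"
      by (simp add: gbinomial_sum_lower_neg flip: power_add mult.assoc)
    finally show ?thesis
      using Suc gbinomial_absorption[of m c] by (simp add: field_simps del: of_nat_Suc)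
  qed simp
qed

lemma newton_h_const: "newton_h (\<lambda>_. c) r = (-1)^r * ((-c) gchoose r)"
  by (simp add: newton_h_eq_newton_e newton_e_const)

lemma newton_h_add_var:
  "newton_h (\<lambda>k. p k + x^k) (Suc r) = newton_h p (Suc r) + x * newton_h (\<lambda>k. p k + x^k) r"
proof -
  define q where "q k = - (p k + x^k)" for k
  have "newton_e (\<lambda>k. q k + x^k) (Suc r) = newton_e q (Suc r) + x * newton_e q r"
    by (rule newton_e_add_var)
  moreover have "(\<lambda>k. q k + x^k) = (\<lambda>k. - p k)" by (simp add: q_def fun_eq_iff)
  ultimately show ?thesis
    by (simp add: newton_h_eq_newton_e q_def [abs_def] algebra_simps)
qed

lemma central_binomial_Suc:
  "Suc r * (2 * Suc r choose Suc r) = 2 * (2 * r + 1) * (2 * r choose r)"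
  by (metis Suc_eq_plus1 Suc_times_binomial Suc_times_binomial_add
      add_2_eq_Suc add_mult_distrib mult_Suc_right nat_mult_1 one_add_one)

lemma gbinomial_minus_half:
  "((-1/2 :: 'a::field_char_0) gchoose r) = (-1)^r * of_nat (2 * r choose r) / 4^r"
proof (induction r)
  case (Suc r)
  have central: "of_nat (Suc r) * (of_nat (2 * Suc r choose Suc r) :: 'a)
      = 2 * (2 * of_nat r + 1) * of_nat (2 * r choose r)"
    using arg_cong[OF central_binomial_Suc[of r], of "of_nat :: nat \<Rightarrow> 'a"]
    by (simp only: of_nat_mult of_nat_Suc of_nat_add of_nat_numeral of_nat_1)
  have "of_nat (Suc r) * ((-1/2 :: 'a) gchoose Suc r) = - (2 * of_nat r + 1) / 2 * (-1/2 gchoose r)"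
    using gbinomial_mult_1[of "-1/2 :: 'a" r] by (simp add: field_simps)
  also have "\<dots> = (-1)^Suc r / 4^Suc r * (of_nat (Suc r) * of_nat (2 * Suc r choose Suc r))"
    unfolding central Suc by (simp add: field_simps)
  also have "\<dots> = of_nat (Suc r) * ((-1)^Suc r * of_nat (2 * Suc r choose Suc r) / 4^Suc r)"
    by (simp add: field_simps del: of_nat_Suc binomial_Suc_Suc)
  finally show ?case using mult_left_cancel[OF of_nat_neq_0[of r]] by blast
qed simp

lemma gbinomial_half_Suc:
  "((1/2 :: 'a::field_char_0) gchoose Suc m) = (-1)^m * of_nat (2 * m choose m) / (2 * of_nat (Suc m) * 4^m)"
  using gbinomial_rec[of "-1/2 :: 'a" m, unfolded gbinomial_minus_half] by (simp add: field_simps)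

lemma tendsto_newton_e:
  fixes q :: "'b \<Rightarrow> nat \<Rightarrow> 'a::real_normed_field"
  assumes "\<And>k. k < r \<Longrightarrow> ((\<lambda>x. q x (Suc k)) \<longlongrightarrow> L (Suc k)) F"
  shows "((\<lambda>x. newton_e (q x) r) \<longlongrightarrow> newton_e L r) F"
proof -
  have "((\<lambda>x. newton_e (q x) j) \<longlongrightarrow> newton_e L j) F" if "j \<le> r" for j
    using that
  proof (induction j rule: less_induct)
    case (less j)
    show ?case
    proof (cases j)
      case (Suc m)
      then show ?thesis
        using less by (simp del: of_nat_Suc) (intro tendsto_intros assms; simp del: of_nat_Suc)
    qed simp
  qed
  then show ?thesis by simp
qed

lemma tendsto_newton_h:
  fixes q :: "'b \<Rightarrow> nat \<Rightarrow> 'a::real_normed_field"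
  assumes "\<And>k. k < r \<Longrightarrow> ((\<lambda>x. q x (Suc k)) \<longlongrightarrow> L (Suc k)) F"
  shows "((\<lambda>x. newton_h (q x) r) \<longlongrightarrow> newton_h L r) F"
  unfolding newton_h_eq_newton_e by (intro tendsto_intros tendsto_newton_e assms)

lemma holomorphic_newton_e:
  assumes "\<And>k. k < r \<Longrightarrow> (\<lambda>s. q s (Suc k)) holomorphic_on S"
  shows "(\<lambda>s. newton_e (q s) r) holomorphic_on S"
proof -
  have "(\<lambda>s. newton_e (q s) j) holomorphic_on S" if "j \<le> r" for j
    using that
  proof (induction j rule: less_induct)
    case (less j)
    show ?case
    proof (cases j)
      case (Suc m)
      then show ?thesis
        using less by (simp del: of_nat_Suc) (intro holomorphic_intros assms; simp)
    qed simp
  qed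
  then show ?thesis by simp
qed

lemma holomorphic_newton_h:
  assumes "\<And>k. k < r \<Longrightarrow> (\<lambda>s. q s (Suc k)) holomorphic_on S"
  shows "(\<lambda>s. newton_h (q s) r) holomorphic_on S"
  unfolding newton_h_eq_newton_e by (intro holomorphic_intros holomorphic_newton_e assms)

section \<open>A continuation of the Riemann zeta function\<close>

text \<open>The error \<open>(f n + f (n + 1)) / 2 - \<integral>\<^bsub>n\<^esub>\<^bsup>n+1\<^esup> f\<close> of the trapezoidal rule for \<open>f t = t powr -s\<close>.
  It is \<open>O(n powr (-Re s - 2))\<close>, and its partial sums telescope against those of \<open>\<zeta>(s)\<close>.\<close>
definition trapezoid_error :: "nat \<Rightarrow> complex \<Rightarrow> complex" where
  "trapezoid_error n s = of_nat n powr (-s)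
     - (of_nat (n + 1) powr (1 - s) - of_nat n powr (1 - s)) / (1 - s)
     - (of_nat n powr (-s) - of_nat (n + 1) powr (-s)) / 2"

lemma powr_of_nat_Suc_eq:
  assumes "n > 0"
  shows "(of_nat (n + 1) :: complex) powr a = of_nat n powr a * (1 + of_real (1 / real n)) powr a"
proof -
  have "(of_nat (n + 1) :: complex) = of_nat n * of_real (1 + 1 / real n)"
    using assms by (simp add: field_simps)
  also have "\<dots> powr a = of_nat n powr a * of_real (1 + 1 / real n) powr a"
    by (rule powr_times_real) auto
  finally show ?thesis by simp
qed

lemma binomial_trapezoid_sums:
  fixes a w :: complex
  assumes w: "norm w < 1" "w \<noteq> 0" and a: "a + 1 \<noteq> 0"
  shows "(\<lambda>j. (a gchoose j) * w^j * (1/2 - 1 / of_nat (Suc j)))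
           sums ((1 + w) powr a / 2 - ((1 + w) powr (a + 1) - 1) / ((a + 1) * w))"
proof -
  have "(\<lambda>j. ((a + 1) gchoose Suc j) * w^Suc j) sums ((1 + w) powr (a + 1) - 1)"
    using gen_binomial_complex[OF w(1), of "a + 1"] by (subst sums_Suc_iff) simp
  moreover have "((a + 1) gchoose Suc j) * w^Suc j = ((a + 1) * w) * ((a gchoose j) * w^j / of_nat (Suc j))" for j
    by (simp add: gbinomial_factors)
  ultimately have "(\<lambda>j. ((a + 1) * w) * ((a gchoose j) * w^j / of_nat (Suc j)))
      sums ((1 + w) powr (a + 1) - 1)"
    by simp
  from sums_divide[OF this, of "(a + 1) * w"]
  have integrated: "(\<lambda>j. (a gchoose j) * w^j / of_nat (Suc j))
      sums (((1 + w) powr (a + 1) - 1) / ((a + 1) * w))"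
    using w a by simp
  have binom: "(\<lambda>j. (a gchoose j) * w^j) sums (1 + w) powr a"
    by (rule gen_binomial_complex[OF w(1)])
  from sums_diff[OF sums_mult2[OF binom, of "1/2"] integrated] show ?thesis
    by (simp add: algebra_simps)
qed

text \<open>With \<open>w = 1/n\<close> and \<open>a = -s\<close>, \<open>trapezoid_error n s / n powr (-s)\<close> is the value of the
  series of \<open>binomial_trapezoid_sums\<close> plus \<open>1/2\<close>. Its terms of degree 0 and 1 are \<open>-1/2\<close> and 0,
  so only powers \<open>w^j\<close> with \<open>j \<ge> 2\<close> remain: this is the \<open>O(n powr -2)\<close> decay.\<close>
lemma trapezoid_error_expansion:
  assumes n: "n \<ge> 2" and s: "s \<noteq> 1"
  defines "w \<equiv> (of_real (1 / real n) :: complex)"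
  shows "(\<lambda>i. ((-s) gchoose (i + 2)) * w^(i + 2) * (1/2 - 1 / of_nat (i + 3)))
           sums (trapezoid_error n s / of_nat n powr (-s))"
proof -
  define a where "a = -s"
  have w: "norm w < 1" "w \<noteq> 0" using n by (simp_all add: w_def norm_divide)
  have a1: "a + 1 \<noteq> 0" using s by (auto simp: a_def algebra_simps)
  have "(\<Sum>i<2. (a gchoose i) * w^i * (1/2 - 1 / of_nat (Suc i))) = -1/2"
    by (simp add: numeral_2_eq_2)
  with binomial_trapezoid_sums[OF w a1]
  have shifted: "(\<lambda>i. (a gchoose (i + 2)) * w^(i + 2) * (1/2 - 1 / of_nat (Suc (i + 2))))
      sums ((1 + w) powr a / 2 - ((1 + w) powr (a + 1) - 1) / ((a + 1) * w) + 1/2)"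
    using sums_iff_shift[where n=2 and f="\<lambda>i. (a gchoose i) * w^i * (1/2 - 1 / of_nat (Suc i))"]
    by simp
  have "trapezoid_error n s
      = of_nat n powr a * ((1 + w) powr a / 2 - ((1 + w) powr (a + 1) - 1) / ((a + 1) * w) + 1/2)"
  proof -
    have e1: "of_nat (n + 1) powr a = of_nat n powr a * (1 + w) powr a"
      using powr_of_nat_Suc_eq[of n a] n by (simp add: w_def)
    have e2: "of_nat (n + 1) powr (a + 1) = of_nat n powr a * (of_nat n * (1 + w) powr (a + 1))"
      using powr_of_nat_Suc_eq[of n "a + 1"] n by (simp add: w_def powr_add)
    have e3: "(of_nat n :: complex) powr (a + 1) = of_nat n powr a * of_nat n"
      using n by (simp add: powr_add)
    have e4: "(of_nat n :: complex) = 1 / w" using n by (simp add: w_def)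
    have e5: "1 - s = a + 1" "-s = a" by (simp_all add: a_def)
    show ?thesis
      unfolding trapezoid_error_def e5 e1 e2 e3 unfolding e4 using a1 w by (simp add: field_simps)
  qed
  then show ?thesis using shifted n by (simp add: a_def add.commute)
qed

lemma norm_pochhammer_le:
  fixes s :: "'a::real_normed_field"
  assumes "norm s \<le> R"
  shows "norm (pochhammer s j) \<le> pochhammer R j"
proof (induction j)
  case (Suc j)
  have "norm (s + of_nat j) \<le> R + of_nat j"
    using assms norm_triangle_ineq[of s "of_nat j"] by simp
  then have "norm (pochhammer s j) * norm (s + of_nat j) \<le> pochhammer R j * (R + of_nat j)"
    using Suc by (intro mult_mono) (auto intro: order_trans[OF norm_ge_zero])
  then show ?case by (simp add: pochhammer_Suc norm_mult)
qed simp

lemma norm_gbinomial_minus_le: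
  fixes s :: "'a::real_normed_field"
  assumes "norm s \<le> R"
  shows "norm ((-s) gchoose j) \<le> pochhammer R j / fact j"
  using norm_pochhammer_le[OF assms, of j]
  by (simp add: gbinomial_pochhammer norm_mult norm_divide norm_power divide_right_mono)

lemma pochhammer_nonneg_of_nonneg:
  fixes x :: "'a::linordered_semidom"
  shows "x \<ge> 0 \<Longrightarrow> pochhammer x n \<ge> 0"
  by (auto simp: pochhammer_prod intro!: prod_nonneg)

definition trapezoid_error_const :: "real \<Rightarrow> real" where
  "trapezoid_error_const R = (\<Sum>i. pochhammer R (i + 2) / fact (i + 2) * (1/2)^i)"

lemma summable_trapezoid_error_const:
  "summable (\<lambda>i. pochhammer R (i + 2) / fact (i + 2) * (1/2 :: real)^i)"
proof -
  define f where "f n = pochhammer R n / fact n * (1/2 :: real)^n" for n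
  have "(\<lambda>n. ((-R) gchoose n) * (-1/2)^n) = f"
    by (simp add: fun_eq_iff f_def gbinomial_pochhammer flip: power_mult_distrib)
  then have "summable f"
    using gen_binomial_real[of "-1/2" "-R"] by (auto simp: sums_iff)
  then have "summable (\<lambda>i. 4 * f (i + 2))"
    by (intro summable_mult) (simp only: summable_iff_shift)
  also have "(\<lambda>i. 4 * f (i + 2)) = (\<lambda>i. pochhammer R (i + 2) / fact (i + 2) * (1/2)^i)"
    by (simp add: fun_eq_iff f_def power_add)
  finally show ?thesis .
qed

lemma norm_of_nat_powr: "norm ((of_nat n :: complex) powr s) = real n powr Re s"
  using norm_powr_real_powr[of "of_nat n" s] by simp

lemma summable_norm_of_nat_powr:
  "Re s > 1 \<Longrightarrow> summable (\<lambda>n. norm ((of_nat n :: complex) powr (-s)))"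
  by (simp add: norm_of_nat_powr summable_real_powr_iff)

lemma norm_trapezoid_error_le:
  assumes n: "n \<ge> 2" and s: "s \<noteq> 1" and R: "norm s \<le> R"
  shows "norm (trapezoid_error n s) \<le> norm (of_nat n powr (-s)) * (trapezoid_error_const R / real n^2)"
proof -
  define w where "w = (of_real (1 / real n) :: complex)"
  define c where "c i = pochhammer R (i + 2) / fact (i + 2) * (1/2 :: real)^i" for i
  have R0: "R \<ge> 0" using R norm_ge_zero order_trans by blast
  have term_le: "norm (((-s) gchoose (i + 2)) * w^(i + 2) * (1/2 - 1 / of_nat (i + 3)))
      \<le> c i / real n^2" for i
  proof -
    have "norm (w^(i + 2)) = (1 / real n)^i / real n^2"
      by (simp add: w_def norm_divide norm_power norm_mult power_add power_divide power2_eq_square)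
    also have "\<dots> \<le> (1/2)^i / real n^2"
      using n by (intro divide_right_mono power_mono) (auto simp: field_simps)
    finally have "norm (w^(i + 2)) \<le> (1/2)^i / real n^2" .
    moreover have "norm (1/2 - 1 / of_nat (i + 3) :: complex) \<le> 1"
    proof -
      have "(1/2 - 1 / of_nat (i + 3) :: complex) = of_real (1/2 - 1 / real (i + 3))" by simp
      then show ?thesis by (simp only: norm_of_real) (simp add: field_simps)
    qed
    ultimately have "norm (((-s) gchoose (i + 2)) * w^(i + 2) * (1/2 - 1 / of_nat (i + 3)))
        \<le> pochhammer R (i + 2) / fact (i + 2) * ((1/2)^i / real n^2) * 1"
      unfolding norm_mult using norm_gbinomial_minus_le[OF R, of "i + 2"]
      by (intro mult_mono mult_nonneg_nonneg divide_nonneg_nonneg pochhammer_nonneg_of_nonneg R0)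
        auto
    then show ?thesis by (simp add: c_def)
  qed
  have summable_c: "summable (\<lambda>i. c i / real n^2)"
    unfolding c_def by (intro summable_divide summable_trapezoid_error_const)
  have "norm (trapezoid_error n s / of_nat n powr (-s)) \<le> (\<Sum>i. c i / real n^2)"
    using norm_suminf_le[OF term_le summable_c] trapezoid_error_expansion[OF n s]
    by (simp add: sums_iff w_def)
  also have "\<dots> = trapezoid_error_const R / real n^2"
    unfolding c_def trapezoid_error_const_def by (rule suminf_divide[OF summable_trapezoid_error_const])
  finally show ?thesis
    using n by (simp add: norm_divide field_simps)
qed

lemma norm_trapezoid_error_le_powr:
  assumes n: "n \<ge> 2" and s: "s \<noteq> 1" and R: "norm s \<le> R" and re: "Re s \<ge> -1/2"
  shows "norm (trapezoid_error n s) \<le> trapezoid_error_const R * real n powr (-3/2)"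
proof -
  have "R \<ge> 0" using R norm_ge_zero order_trans by blast
  then have "trapezoid_error_const R \<ge> 0"
    unfolding trapezoid_error_const_def
    by (intro suminf_nonneg summable_trapezoid_error_const mult_nonneg_nonneg divide_nonneg_nonneg
        pochhammer_nonneg_of_nonneg) auto
  moreover have "norm (of_nat n powr (-s) :: complex) \<le> real n powr (1/2)"
    using n re by (simp add: norm_of_nat_powr powr_mono)
  ultimately have "norm (trapezoid_error n s) \<le> real n powr (1/2) * (trapezoid_error_const R / real n^2)"
    using norm_trapezoid_error_le[OF n s R] by (meson divide_nonneg_nonneg mult_right_mono order_trans zero_le_power2)
  also have "\<dots> = trapezoid_error_const R * (real n powr (1/2) / real n^2)"
    by simp
  also have "real n powr (1/2) / real n^2 = real n powr (-3/2)"
    using n by (simp add: powr_diff [symmetric] flip: powr_numeral)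
  finally show ?thesis .
qed

definition zeta_ext_domain :: "complex set" where
  "zeta_ext_domain = {s. Re s > -1/2} - {1}"

text \<open>The sum of trapezoidal errors starts at \<open>n = 2\<close> because their expansion in powers of \<open>1/n\<close>
  needs \<open>n \<ge> 2\<close>; the other terms are the summand \<open>n = 1\<close> of \<open>\<zeta>\<close> and the boundary terms of the
  telescoping sum.\<close>
definition zeta_ext :: "complex \<Rightarrow> complex" where
  "zeta_ext s = 1 + 2 powr (1 - s) / (s - 1) + 2 powr (-s) / 2 + (\<Sum>i. trapezoid_error (i + 2) s)"

lemma open_zeta_ext_domain: "open zeta_ext_domain"
  unfolding zeta_ext_domain_def by (intro open_Diff open_halfspace_Re_gt) auto

lemma holomorphic_trapezoid_error_sum:
  "(\<lambda>s. \<Sum>i. trapezoid_error (i + 2) s) holomorphic_on zeta_ext_domain"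
proof (rule holomorphic_uniform_sequence[OF open_zeta_ext_domain])
  show "(\<lambda>s. \<Sum>i<m. trapezoid_error (i + 2) s) holomorphic_on zeta_ext_domain" for m
    unfolding trapezoid_error_def zeta_ext_domain_def by (intro holomorphic_intros) auto
  fix x assume x: "x \<in> zeta_ext_domain"
  obtain e where e: "e > 0" "cball x e \<subseteq> zeta_ext_domain"
    using open_contains_cball open_zeta_ext_domain x by blast
  have "summable (\<lambda>i. real (i + 2) powr (-3/2))"
    using summable_iff_shift[of "\<lambda>i. real i powr (-3/2)" 2] summable_real_powr_iff by simp
  then have majorant: "summable (\<lambda>i. trapezoid_error_const (norm x + e) * real (i + 2) powr (-3/2))"
    by (rule summable_mult)
  have "uniform_limit (cball x e) (\<lambda>m s. \<Sum>i<m. trapezoid_error (i + 2) s)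
      (\<lambda>s. \<Sum>i. trapezoid_error (i + 2) s) sequentially"
  proof (rule Weierstrass_m_test[OF _ majorant])
    fix i s assume s: "s \<in> cball x e"
    then have "norm s \<le> norm x + e"
      using norm_triangle_ineq2[of s x] by (auto simp: dist_norm norm_minus_commute)
    moreover have "s \<in> zeta_ext_domain" using s e by auto
    ultimately show "norm (trapezoid_error (i + 2) s)
        \<le> trapezoid_error_const (norm x + e) * real (i + 2) powr (-3/2)"
      by (intro norm_trapezoid_error_le_powr) (auto simp: zeta_ext_domain_def)
  qed
  with e show "\<exists>d>0. cball x d \<subseteq> zeta_ext_domain \<and> uniform_limit (cball x d)
      (\<lambda>m s. \<Sum>i<m. trapezoid_error (i + 2) s) (\<lambda>s. \<Sum>i. trapezoid_error (i + 2) s) sequentially"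
    by blast
qed

lemma holomorphic_zeta_ext: "zeta_ext holomorphic_on zeta_ext_domain"
  unfolding zeta_ext_def[abs_def]
  by (intro holomorphic_intros holomorphic_trapezoid_error_sum) (auto simp: zeta_ext_domain_def)

lemma zeta_ext_0: "zeta_ext 0 = -1/2"
proof -
  have "trapezoid_error n 0 = 0" if "n > 0" for n
  proof -
    have "(of_nat n :: complex) \<noteq> 0" "(of_nat (n + 1) :: complex) \<noteq> 0"
      using that by (simp_all only: of_nat_eq_0_iff)
    then show ?thesis unfolding trapezoid_error_def by simp
  qed
  then show ?thesis unfolding zeta_ext_def by simp
qed

lemma sum_trapezoid_error:
  fixes s :: complex
  defines "f \<equiv> \<lambda>n. (of_nat n :: complex) powr (-s)" and "A \<equiv> \<lambda>n. (of_nat n :: complex) powr (1 - s)"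
  shows "(\<Sum>i<m. trapezoid_error (i + 2) s)
    = (\<Sum>i<m. f (i + 2)) - (A (m + 2) - A 2) / (1 - s) - (f 2 - f (m + 2)) / 2"
proof -
  have "(\<Sum>i<m. trapezoid_error (i + 2) s)
      = (\<Sum>i<m. f (i + 2)) - (\<Sum>i<m. A (Suc i + 2) - A (i + 2)) / (1 - s)
        - (\<Sum>i<m. f (i + 2) - f (Suc i + 2)) / 2"
    unfolding trapezoid_error_def f_def A_def sum_subtractf [symmetric] sum_divide_distrib
    by (simp add: add_ac)
  also have "(\<Sum>i<m. A (Suc i + 2) - A (i + 2)) = A (m + 2) - A 2"
    using sum_lessThan_telescope[of "\<lambda>i. A (i + 2)" m] by (simp add: numeral_2_eq_2)
  also have "(\<Sum>i<m. f (i + 2) - f (Suc i + 2)) = f 2 - f (m + 2)"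
    using sum_lessThan_telescope'[of "\<lambda>i. f (i + 2)" m] by (simp add: numeral_2_eq_2)
  finally show ?thesis .
qed

lemma sums_trapezoid_error:
  assumes s: "Re s > 1"
  shows "(\<lambda>i. trapezoid_error (i + 2) s)
    sums ((\<Sum>n. (of_nat n :: complex) powr (-s)) - 1 + 2 powr (1 - s) / (1 - s) - 2 powr (-s) / 2)"
proof -
  define f where "f n = (of_nat n :: complex) powr (-s)" for n
  define A where "A n = (of_nat n :: complex) powr (1 - s)" for n
  have "summable f"
    unfolding f_def using summable_norm_cancel[OF summable_norm_of_nat_powr[OF s]] .
  then have "(\<lambda>i. f (i + 2)) sums (suminf f - (f 0 + f 1))"
    by (subst sums_iff_shift) (simp_all add: summable_sums numeral_2_eq_2)
  then have partial: "(\<lambda>m. \<Sum>i<m. f (i + 2)) \<longlonglongrightarrow> suminf f - 1"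
    by (simp add: sums_def f_def)
  have "(\<lambda>m. of_nat m powr a) \<longlonglongrightarrow> (0 :: complex)" if "Re a < 0" for a
    using tendsto_neg_powr_complex_of_nat[OF filterlim_ident that] .
  from LIMSEQ_ignore_initial_segment[OF this, of _ 2]
  have "(\<lambda>m. A (m + 2)) \<longlonglongrightarrow> 0" "(\<lambda>m. f (m + 2)) \<longlonglongrightarrow> 0"
    using s by (simp_all add: A_def f_def)
  with partial have "(\<lambda>m. (\<Sum>i<m. f (i + 2)) - (A (m + 2) - A 2) / (1 - s) - (f 2 - f (m + 2)) / 2)
      \<longlonglongrightarrow> (suminf f - 1) - (0 - A 2) / (1 - s) - (f 2 - 0) / 2"
    using s by (intro tendsto_intros) auto
  also have "(\<lambda>m. (\<Sum>i<m. f (i + 2)) - (A (m + 2) - A 2) / (1 - s) - (f 2 - f (m + 2)) / 2)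
      = (\<lambda>m. \<Sum>i<m. trapezoid_error (i + 2) s)"
    by (simp only: sum_trapezoid_error f_def A_def)
  finally show ?thesis
    unfolding sums_def by (simp add: A_def f_def [abs_def])
qed

lemma zeta_ext_eq_suminf:
  assumes s: "Re s > 1"
  shows "zeta_ext s = (\<Sum>n. (of_nat n :: complex) powr (-s))"
proof -
  have "zeta_ext s = (\<Sum>n. (of_nat n :: complex) powr (-s))
      + (2 powr (1 - s) / (s - 1) + 2 powr (1 - s) / (1 - s))"
    unfolding zeta_ext_def sums_unique[OF sums_trapezoid_error[OF s], symmetric] by simp
  also have "2 powr (1 - s) / (s - 1) + 2 powr (1 - s) / (1 - s) = 0"
    by (subst minus_diff_eq[of s 1, symmetric], simp only: divide_minus_right) simp
  finally show ?thesis by simp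
qed

lemma power_sums_tendsto_zeta_ext:
  assumes s: "Re s > 1" and k: "k \<ge> 1"
  shows "(\<lambda>N. \<Sum>n=1..N. ((of_nat n :: complex) powr (-s))^k) \<longlonglongrightarrow> zeta_ext (of_nat k * s)"
proof -
  have ks: "Re (of_nat k * s) > 1"
    using s k by (simp add: less_le_trans [OF _ mult_right_mono [of 1 "real k"]])
  have "(\<lambda>n. (of_nat n :: complex) powr (-(of_nat k * s))) sums zeta_ext (of_nat k * s)"
    unfolding zeta_ext_eq_suminf[OF ks]
    by (rule summable_sums[OF summable_norm_cancel[OF summable_norm_of_nat_powr[OF ks]]])
  then have "(\<lambda>N. \<Sum>n<Suc N. (of_nat n :: complex) powr (-(of_nat k * s))) \<longlonglongrightarrow> zeta_ext (of_nat k * s)"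
    unfolding sums_def by (rule LIMSEQ_Suc)
  moreover have "(\<Sum>n<Suc N. (of_nat n :: complex) powr (-(of_nat k * s)))
      = (\<Sum>n=1..N. ((of_nat n :: complex) powr (-s))^k)" for N
  proof -
    have "(of_nat n powr (-s))^k = (of_nat n :: complex) powr (-(of_nat k * s))" for n
      using k by (cases "n = 0") (auto simp: powr_def exp_of_nat_mult [symmetric] algebra_simps)
    then show ?thesis
      by (simp only: sum.lessThan_Suc_shift) (simp add: sum.atLeast1_atMost_eq)
  qed
  ultimately show ?thesis by simp
qed

section \<open>Truncated multiple zeta sums\<close>

lemma sum_prod_list_lists_length_eq:
  fixes g :: "'b \<Rightarrow> 'a::comm_semiring_1"
  assumes "finite A"
  shows "(\<Sum>ns\<in>{ns. set ns \<subseteq> A \<and> length ns = r}. prod_list (map g ns)) = (sum g A)^r"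
proof (induction r)
  case 0
  have "{ns. set ns \<subseteq> A \<and> length ns = 0} = {[]}" by auto
  then show ?case by simp
next
  case (Suc r)
  let ?L = "{ns. set ns \<subseteq> A \<and> length ns = r}"
  have "(\<Sum>ns\<in>{ns. set ns \<subseteq> A \<and> length ns = Suc r}. prod_list (map g ns))
      = (\<Sum>(ns, a)\<in>?L \<times> A. g a * prod_list (map g ns))"
    unfolding lists_length_Suc_eq by (subst sum.reindex[OF inj_split_Cons]) (simp add: case_prod_unfold)
  also have "\<dots> = (\<Sum>ns\<in>?L. prod_list (map g ns)) * sum g A"
    by (simp add: sum.cartesian_product [symmetric] sum_product mult.commute) (rule sum.swap)
  finally show ?case using Suc by (simp add: mult.commute)
qed

lemma finite_lists_bounded: "finite (F :: nat list set) \<Longrightarrow> \<exists>N. F \<subseteq> lists {..N}"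
proof -
  assume "finite F"
  then obtain N where "(\<Union>ns\<in>F. set ns) \<subseteq> {..N}"
    using finite_nat_set_iff_bounded_le by (metis finite_UN finite_set atMost_iff subsetI)
  then show ?thesis by blast
qed

lemma abs_summable_on_prod_list:
  fixes x :: "nat \<Rightarrow> 'a::real_normed_field"
  assumes "summable (\<lambda>n. norm (x n))"
  shows "(\<lambda>ns. prod_list (map x ns)) abs_summable_on {ns. length ns = r}"
proof -
  have norm_prod: "norm (prod_list (map x ns)) = prod_list (map (\<lambda>n. norm (x n)) ns)" for ns
    by (induction ns) (simp_all add: norm_mult)
  have "(\<lambda>ns. prod_list (map (\<lambda>n. norm (x n)) ns)) summable_on {ns. length ns = r}"
  proof (rule nonneg_bdd_above_summable_on)
    show "0 \<le> prod_list (map (\<lambda>n. norm (x n)) ns)" for ns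
      by (induction ns) simp_all
    show "bdd_above (sum (\<lambda>ns. prod_list (map (\<lambda>n. norm (x n)) ns))
        ` {F. F \<subseteq> {ns. length ns = r} \<and> finite F})"
    proof (rule bdd_aboveI2)
      fix F :: "nat list set" assume F: "F \<in> {F. F \<subseteq> {ns. length ns = r} \<and> finite F}"
      then obtain N where "F \<subseteq> lists {..N}" using finite_lists_bounded by blast
      with F have "F \<subseteq> {ns. set ns \<subseteq> {..N} \<and> length ns = r}" by auto
      then have "sum (\<lambda>ns. prod_list (map (\<lambda>n. norm (x n)) ns)) F
          \<le> (\<Sum>ns\<in>{ns. set ns \<subseteq> {..N} \<and> length ns = r}. prod_list (map (\<lambda>n. norm (x n)) ns))"
        by (intro sum_mono2 finite_lists_length_eq) (auto intro!: prod_list_nonneg)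
      also have "\<dots> = (\<Sum>n\<le>N. norm (x n))^r"
        by (rule sum_prod_list_lists_length_eq) simp
      also have "\<dots> \<le> (\<Sum>n. norm (x n))^r"
        by (intro power_mono sum_le_suminf assms sum_nonneg) auto
      finally show "sum (\<lambda>ns. prod_list (map (\<lambda>n. norm (x n)) ns)) F \<le> (\<Sum>n. norm (x n))^r" .
    qed
  qed
  then show ?thesis by (simp add: norm_prod)
qed

lemma tendsto_sum_lists_atMost:
  assumes "(f has_sum S) A" and "\<And>N. finite (A \<inter> lists {..N})"
  shows "(\<lambda>N. sum f (A \<inter> lists {..N})) \<longlonglongrightarrow> S"
proof -
  have "filterlim (\<lambda>N. A \<inter> lists {..N}) (finite_subsets_at_top A) sequentially"
  proof (subst filterlim_finite_subsets_at_top, intro allI impI)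
    fix X assume X: "finite X \<and> X \<subseteq> A"
    then obtain K where "X \<subseteq> lists {..K}" using finite_lists_bounded by blast
    then have "X \<subseteq> A \<inter> lists {..N}" if "N \<ge> K" for N
      using X that lists_mono[of "{..K}" "{..N}"] by auto
    then show "\<forall>\<^sub>F N in sequentially. finite (A \<inter> lists {..N}) \<and> X \<subseteq> A \<inter> lists {..N}
        \<and> A \<inter> lists {..N} \<subseteq> A"
      using assms(2) eventually_sequentially by blast
  qed
  with assms(1) show ?thesis
    unfolding has_sum_def by (rule filterlim_compose[unfolded o_def])
qed

lemma finite_Int_lists_atMost:
  fixes N :: nat
  assumes "A \<subseteq> {ns. length ns = r}"
  shows "finite (A \<inter> lists {..N})"
  by (rule finite_subset[OF _ finite_lists_length_eq[OF finite_atMost, of N r]]) (use assms in auto)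

lemma mzv_idx_Int_lists_Suc:
  "mzv_idx (Suc r) \<inter> lists {..Suc N}
     = mzv_idx (Suc r) \<inter> lists {..N} \<union> Cons (Suc N) ` (mzv_idx r \<inter> lists {..N})"
proof (intro set_eqI iffI)
  fix ns assume ns: "ns \<in> mzv_idx (Suc r) \<inter> lists {..Suc N}"
  then obtain m ms where ns_eq: "ns = m # ms" and ms: "ms \<in> mzv_idx r"
    and below: "\<forall>n\<in>set ms. n < m" and "m \<le> Suc N"
    by (auto simp: mzv_idx_def length_Suc_conv)
  show "ns \<in> mzv_idx (Suc r) \<inter> lists {..N} \<union> Cons (Suc N) ` (mzv_idx r \<inter> lists {..N})"
  proof (cases "m = Suc N")
    case True
    with below have "ms \<in> lists {..N}" by (auto simp: less_Suc_eq_le)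
    with ms True ns_eq show ?thesis by blast
  next
    case False
    with \<open>m \<le> Suc N\<close> below have "ns \<in> lists {..N}" by (auto simp: ns_eq)
    with ns show ?thesis by blast
  qed
qed (auto simp: mzv_idx_def less_Suc_eq_le intro: le_SucI)

lemma mzsv_idx_Int_lists_Suc:
  "mzsv_idx (Suc r) \<inter> lists {..Suc N}
     = mzsv_idx (Suc r) \<inter> lists {..N} \<union> Cons (Suc N) ` (mzsv_idx r \<inter> lists {..Suc N})"
proof (intro set_eqI iffI)
  fix ns assume ns: "ns \<in> mzsv_idx (Suc r) \<inter> lists {..Suc N}"
  then obtain m ms where ns_eq: "ns = m # ms" and ms: "ms \<in> mzsv_idx r \<inter> lists {..Suc N}"
    and below: "\<forall>n\<in>set ms. n \<le> m" and "m \<le> Suc N"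
    by (auto simp: mzsv_idx_def length_Suc_conv lists_eq_set)
  show "ns \<in> mzsv_idx (Suc r) \<inter> lists {..N} \<union> Cons (Suc N) ` (mzsv_idx r \<inter> lists {..Suc N})"
  proof (cases "m = Suc N")
    case True
    with ms ns_eq show ?thesis by blast
  next
    case False
    with \<open>m \<le> Suc N\<close> below have "ns \<in> lists {..N}" by (auto simp: ns_eq)
    with ns show ?thesis by blast
  qed
qed (auto simp: mzsv_idx_def)

lemma sum_mzv_idx_eq_newton_e:
  fixes x :: "nat \<Rightarrow> 'a::field_char_0"
  shows "(\<Sum>ns\<in>mzv_idx r \<inter> lists {..N}. \<Prod>n\<leftarrow>ns. x n) = newton_e (\<lambda>k. \<Sum>n=1..N. x n ^ k) r"
proof (induction N arbitrary: r)
  case 0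
  have "mzv_idx r \<inter> lists {..0} = (if r = 0 then {[]} else {})"
    by (auto simp: mzv_idx_def neq_Nil_conv)
  then show ?case by (cases r) simp_all
next
  case (Suc N)
  show ?case
  proof (cases r)
    case 0
    have "mzv_idx 0 \<inter> lists {..Suc N} = {[]}" by (auto simp: mzv_idx_def)
    then show ?thesis using 0 by simp
  next
    case (Suc r')
    have fin: "finite (mzv_idx r'' \<inter> lists {..N})" for r''
      by (rule finite_Int_lists_atMost[of _ r'']) (auto simp: mzv_idx_def)
    have "(\<Sum>ns\<in>mzv_idx (Suc r') \<inter> lists {..Suc N}. \<Prod>n\<leftarrow>ns. x n)
        = (\<Sum>ns\<in>mzv_idx (Suc r') \<inter> lists {..N}. \<Prod>n\<leftarrow>ns. x n)
          + x (Suc N) * (\<Sum>ns\<in>mzv_idx r' \<inter> lists {..N}. \<Prod>n\<leftarrow>ns. x n)"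
      unfolding mzv_idx_Int_lists_Suc
      by (subst sum.union_disjoint) (auto simp: fin sum.reindex sum_distrib_left)
    also have "\<dots> = newton_e (\<lambda>k. (\<Sum>n=1..N. x n ^ k) + x (Suc N) ^ k) (Suc r')"
      by (simp only: Suc.IH newton_e_add_var)
    finally show ?thesis using Suc by simp
  qed
qed

lemma sum_mzsv_idx_eq_newton_h:
  fixes x :: "nat \<Rightarrow> 'a::field_char_0"
  shows "(\<Sum>ns\<in>mzsv_idx r \<inter> lists {..N}. \<Prod>n\<leftarrow>ns. x n) = newton_h (\<lambda>k. \<Sum>n=1..N. x n ^ k) r"
proof (induction N arbitrary: r)
  case 0
  have "mzsv_idx r \<inter> lists {..0} = (if r = 0 then {[]} else {})"
    by (auto simp: mzsv_idx_def neq_Nil_conv)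
  then show ?case by (cases r) simp_all
next
  case (Suc N)
  note IH_N = Suc.IH
  show ?case
  proof (induction r)
    case 0
    have "mzsv_idx 0 \<inter> lists {..Suc N} = {[]}" by (auto simp: mzsv_idx_def)
    then show ?case by simp
  next
    case (Suc r)
    have fin: "finite (mzsv_idx r' \<inter> lists {..N'})" for r' N'
      by (rule finite_Int_lists_atMost[of _ r']) (auto simp: mzsv_idx_def)
    have "(\<Sum>ns\<in>mzsv_idx (Suc r) \<inter> lists {..Suc N}. \<Prod>n\<leftarrow>ns. x n)
        = (\<Sum>ns\<in>mzsv_idx (Suc r) \<inter> lists {..N}. \<Prod>n\<leftarrow>ns. x n)
          + x (Suc N) * (\<Sum>ns\<in>mzsv_idx r \<inter> lists {..Suc N}. \<Prod>n\<leftarrow>ns. x n)"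
      unfolding mzsv_idx_Int_lists_Suc
      by (subst sum.union_disjoint) (auto simp: fin sum.reindex sum_distrib_left)
    also have "\<dots> = newton_h (\<lambda>k. (\<Sum>n=1..N. x n ^ k) + x (Suc N) ^ k) (Suc r)"
      using Suc.IH by (simp only: IH_N newton_h_add_var) simp
    finally show ?case by simp
  qed
qed

lemma tendsto_partial_sums_prod_list_powr:
  assumes "Re s > 1" and A: "A \<subseteq> {ns. length ns = r}"
  shows "(\<lambda>N. \<Sum>ns\<in>A \<inter> lists {..N}. \<Prod>n\<leftarrow>ns. (of_nat n :: complex) powr (-s))
    \<longlonglongrightarrow> (\<Sum>\<^sub>\<infinity>ns\<in>A. \<Prod>n\<leftarrow>ns. of_nat n powr (-s))"
proof (rule tendsto_sum_lists_atMost)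
  have "(\<lambda>ns. \<Prod>n\<leftarrow>ns. (of_nat n :: complex) powr (-s)) summable_on {ns. length ns = r}"
    by (rule abs_summable_summable[OF abs_summable_on_prod_list[OF summable_norm_of_nat_powr]]) fact
  then show "((\<lambda>ns. \<Prod>n\<leftarrow>ns. of_nat n powr (-s)) has_sum (\<Sum>\<^sub>\<infinity>ns\<in>A. \<Prod>n\<leftarrow>ns. of_nat n powr (-s))) A"
    by (intro has_sum_infsum summable_on_subset_banach[OF _ A])
  show "finite (A \<inter> lists {..N})" for N
    by (rule finite_Int_lists_atMost[OF A])
qed

lemma mzeta_tendsto_newton_e:
  assumes "Re s > 1"
  shows "(\<lambda>N. newton_e (\<lambda>k. \<Sum>n=1..N. ((of_nat n :: complex) powr (-s))^k) r) \<longlonglongrightarrow> mzeta r s"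
proof -
  have "mzv_idx r \<subseteq> {ns. length ns = r}" by (auto simp: mzv_idx_def)
  from tendsto_partial_sums_prod_list_powr[OF assms this] show ?thesis
    by (simp only: mzeta_def sum_mzv_idx_eq_newton_e)
qed

lemma mzeta_star_tendsto_newton_h:
  assumes "Re s > 1"
  shows "(\<lambda>N. newton_h (\<lambda>k. \<Sum>n=1..N. ((of_nat n :: complex) powr (-s))^k) r) \<longlonglongrightarrow> mzeta_star r s"
proof -
  have "mzsv_idx r \<subseteq> {ns. length ns = r}" by (auto simp: mzsv_idx_def)
  from tendsto_partial_sums_prod_list_powr[OF assms this] show ?thesis
    by (simp only: mzeta_star_def sum_mzsv_idx_eq_newton_h)
qed

section \<open>Continuation to \<open>s = 0\<close>\<close>

text \<open>Chosen so that \<open>k * s \<in> zeta_ext_domain\<close> for \<open>1 \<le> k \<le> r\<close>. The bound uses \<open>Suc r\<close> so that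
  the domain contains 0 also for \<open>r = 0\<close>, where \<open>-1 / (2 * 0) = 0\<close>.\<close>
definition mzv_cont_domain :: "nat \<Rightarrow> complex set" where
  "mzv_cont_domain r = {s. Re s > -1 / (2 * of_nat (Suc r))} - (\<lambda>k. 1 / of_nat k) ` {1..r}"

lemma open_mzv_cont_domain: "open (mzv_cont_domain r)"
  unfolding mzv_cont_domain_def
  by (intro open_Diff open_halfspace_Re_gt finite_imp_closed finite_imageI) auto

lemma connected_mzv_cont_domain: "connected (mzv_cont_domain r)"
  unfolding mzv_cont_domain_def
  by (intro connected_open_diff_countable open_halfspace_Re_gt convex_connected
      convex_halfspace_Re_gt countable_finite finite_imageI) auto

lemma zero_in_mzv_cont_domain: "0 \<in> mzv_cont_domain r"
  by (auto simp: mzv_cont_domain_def)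

lemma half_plane_subset_mzv_cont_domain: "{s. Re s > 1} \<subseteq> mzv_cont_domain r"
proof
  fix s :: complex assume "s \<in> {s. Re s > 1}"
  then have s: "Re s > 1" by simp
  have "s \<noteq> 1 / of_nat k" for k
  proof
    assume "s = 1 / of_nat k"
    then have "Re s = 1 / real k" by simp
    moreover have "1 / real k \<le> 1" by (cases k) auto
    ultimately show False using s by simp
  qed
  moreover have "-1 / (2 * real (Suc r)) \<le> 0" by simp
  with s have "-1 / (2 * real (Suc r)) < Re s" by linarith
  ultimately show "s \<in> mzv_cont_domain r"
    unfolding mzv_cont_domain_def by auto
qed

lemma mult_in_zeta_ext_domain:
  assumes s: "s \<in> mzv_cont_domain r" and k: "k \<in> {1..r}"
  shows "of_nat k * s \<in> zeta_ext_domain"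
proof -
  have "real k * Re s > real k * (-1 / (2 * real (Suc r)))"
    using s k by (intro mult_strict_left_mono) (auto simp: mzv_cont_domain_def)
  moreover have "real k * (-1 / (2 * real (Suc r))) \<ge> -1/2"
    using k by (simp add: field_simps)
  moreover have "Re (of_nat k * s) = real k * Re s" by simp
  ultimately have "Re (of_nat k * s) > -1/2" by linarith
  moreover have "of_nat k * s \<noteq> 1"
  proof
    assume "of_nat k * s = 1"
    then have "s = 1 / of_nat k" using k by (auto simp: field_simps)
    then show False using s k by (auto simp: mzv_cont_domain_def)
  qed
  ultimately show ?thesis by (auto simp: zeta_ext_domain_def)
qed

lemma cont_value_at_0_power_sums:
  fixes \<Phi> :: "(nat \<Rightarrow> complex) \<Rightarrow> complex"
  assumes hol: "\<And>q. (\<And>k. k < r \<Longrightarrow> (\<lambda>s. q s (Suc k)) holomorphic_on mzv_cont_domain r)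
      \<Longrightarrow> (\<lambda>s. \<Phi> (q s)) holomorphic_on mzv_cont_domain r"
    and cont: "\<And>q L. (\<And>k. k < r \<Longrightarrow> (\<lambda>N. q N (Suc k)) \<longlonglongrightarrow> L (Suc k))
      \<Longrightarrow> (\<lambda>N. \<Phi> (q N)) \<longlonglongrightarrow> \<Phi> L"
    and lim: "\<And>s. Re s > 1 \<Longrightarrow> (\<lambda>N. \<Phi> (\<lambda>k. \<Sum>n=1..N. ((of_nat n :: complex) powr (-s))^k)) \<longlonglongrightarrow> f s"
  shows "cont_value_at_0 f (\<Phi> (\<lambda>_. -1/2))"
  unfolding cont_value_at_0_def
proof (intro exI conjI allI impI)
  define F where "F s = \<Phi> (\<lambda>k. zeta_ext (of_nat k * s))" for s
  show "open (mzv_cont_domain r)" "connected (mzv_cont_domain r)" "0 \<in> mzv_cont_domain r"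
    "{s. Re s > 1} \<subseteq> mzv_cont_domain r"
    by (fact open_mzv_cont_domain connected_mzv_cont_domain zero_in_mzv_cont_domain
        half_plane_subset_mzv_cont_domain)+
  show "F holomorphic_on mzv_cont_domain r"
    unfolding F_def [abs_def]
  proof (rule hol)
    fix k assume "k < r"
    then have "(\<lambda>s. of_nat (Suc k) * s) ` mzv_cont_domain r \<subseteq> zeta_ext_domain"
      unfolding image_subset_iff by (intro ballI mult_in_zeta_ext_domain) auto
    then show "(\<lambda>s. zeta_ext (of_nat (Suc k) * s)) holomorphic_on mzv_cont_domain r"
      by (intro holomorphic_on_compose_gen [OF _ holomorphic_zeta_ext, unfolded o_def])
        (auto intro: holomorphic_intros)
  qed
  show "F s = f s" if "Re s > 1" for s
  proof (rule LIMSEQ_unique [OF _ lim [OF that]])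
    show "(\<lambda>N. \<Phi> (\<lambda>k. \<Sum>n=1..N. (of_nat n powr (-s))^k)) \<longlonglongrightarrow> F s"
      unfolding F_def by (rule cont, rule power_sums_tendsto_zeta_ext [OF that]) simp
  qed
  show "F 0 = \<Phi> (\<lambda>_. -1/2)"
    by (simp add: F_def zeta_ext_0)
qed

lemma cont_value_at_0_mzeta: "cont_value_at_0 (mzeta r) (newton_e (\<lambda>_. -1/2) r)"
  by (rule cont_value_at_0_power_sums[where \<Phi>="\<lambda>p. newton_e p r" and r=r])
    (blast intro: holomorphic_newton_e tendsto_newton_e mzeta_tendsto_newton_e)+

lemma cont_value_at_0_mzeta_star: "cont_value_at_0 (mzeta_star r) (newton_h (\<lambda>_. -1/2) r)"
  by (rule cont_value_at_0_power_sums[where \<Phi>="\<lambda>p. newton_h p r" and r=r])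
    (blast intro: holomorphic_newton_h tendsto_newton_h mzeta_star_tendsto_newton_h)+

theorem corollary4p2:
  fixes r :: nat
  assumes "r \<ge> 1"
  shows "cont_value_at_0 (mzeta r)
           ((-1) ^ r / 4 ^ r * of_nat ((2 * r) choose r))
       \<and> cont_value_at_0 (mzeta_star r)
           (- 1 / (of_nat r * 2 ^ (2 * r - 1)) * of_nat ((2 * r - 2) choose (r - 1)))"
proof -
  obtain m where r: "r = Suc m" using assms by (cases r) auto
  have "newton_e (\<lambda>_. -1/2 :: complex) r = (-1) ^ r / 4 ^ r * of_nat ((2 * r) choose r)"
    unfolding newton_e_const gbinomial_minus_half by simp
  moreover have "newton_h (\<lambda>_. -1/2 :: complex) r
      = - 1 / (of_nat r * 2 ^ (2 * r - 1)) * of_nat ((2 * r - 2) choose (r - 1))"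
  proof -
    have "(2 :: complex) ^ (2 * r - 1) = 2 * 4 ^ m"
      by (simp add: r power_mult)
    then show ?thesis
      unfolding r newton_h_const minus_divide_left [symmetric] minus_minus gbinomial_half_Suc
      by (simp add: field_simps)
  qed
  ultimately show ?thesis
    using cont_value_at_0_mzeta [of r] cont_value_at_0_mzeta_star [of r] by simp
qed

end
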